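(* Let $X$ be a locally compact Hausdorff, totally disconnected topological space, $G$ a discrete group, $\phi=(\phi_g,X_g,X)_{g\in G}$ a partial action of $G$ on $X$ with every $X_g$ clopen, and $K$ a field. Then the Steinberg algebra $A_K(\mathcal{G}_X)$ is $G$-graded von Neumann regular.
   Context: A partial action of $G$ (identity $\varepsilon$) on a topological space $X$ is $(\phi_g,X_g,X)_{g\in G}$ with $X_g$ open, homeomorphisms $\phi_g:X_{g^{-1}}\to X_g$, and (i) $X_\varepsilon=X$, $\phi_\varepsilon=\operatorname{id}$; (ii) $\phi_g(X_{g^{-1}}\cap X_h)=X_g\cap X_{gh}$; (iii) $\phi_g\phi_h(x)=\phi_{gh}(x)$ for $x\in X_{h^{-1}}\cap X_{h^{-1}g^{-1}}$. The groupoid $\mathcal{G}_X=\bigcup_{g}\{g\}\times X_g\subseteq G\times X$ (product topology) has range $r(g,x)=x$, domain $d(g,x)=\phi_{g^{-1}}(x)$, composition $(g,x)(h,y)=(gh,x)$ when $y=\phi_{g^{-1}}(x)$, inverse $(g^{-1},\phi_{g^{-1}}(x))$, and is $G$-graded by $(g,x)\mapsto g$. The Steinberg algebra $A_K(\mathcal{G}_X)$ consists of compactly supported locally constant functions $\mathcal{G}_X\to K$ with convolution product, graded by $A_K(\mathcal{G}_X)_g=\{f:\operatorname{supp}f\subseteq\{g\}\times X_g\}$. A graded ring is graded von Neumann regular if for each homogeneous $x$ there is $y$ with $xyx=x$. *)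

theory Defs
  imports "HOL-Analysis.Analysis"
begin

text \<open>The group G is written additively via the type class group_add
  (not necessarily commutative): identity 0, product g + h, inverse - g.\<close>

definition totally_disconnected_space :: "'a topology \<Rightarrow> bool" where
  "totally_disconnected_space T \<longleftrightarrow>
     (\<forall>S. connectedin T S \<longrightarrow> (\<exists>a. S \<subseteq> {a}))"

definition partial_action ::
  "('g::group_add \<Rightarrow> 'x::topological_space \<Rightarrow> 'x) \<Rightarrow> ('g \<Rightarrow> 'x set) \<Rightarrow> bool" where
  "partial_action phi Xg \<longleftrightarrow>
     (\<forall>g. open (Xg g)) \<and>
     (\<forall>g. homeomorphic_map (top_of_set (Xg (- g))) (top_of_set (Xg g)) (phi g)) \<and>
     Xg 0 = UNIV \<and> (\<forall>x. phi 0 x = x) \<and>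
     (\<forall>g h. phi g ` (Xg (- g) \<inter> Xg h) = Xg g \<inter> Xg (g + h)) \<and>
     (\<forall>g h. \<forall>x \<in> Xg (- h) \<inter> Xg (- h + - g). phi g (phi h x) = phi (g + h) x)"

text \<open>The groupoid of germs as a subset of G \<times> X, with its topology
  (subspace of the product of discrete G with X).\<close>
definition groupoid_set :: "('g \<Rightarrow> 'x set) \<Rightarrow> ('g \<times> 'x) set" where
  "groupoid_set Xg = {(g, x). x \<in> Xg g}"

definition groupoid_top :: "('g \<Rightarrow> 'x::topological_space set) \<Rightarrow> ('g \<times> 'x) topology" where
  "groupoid_top Xg = subtopology (prod_topology (discrete_topology UNIV) euclidean) (groupoid_set Xg)"

text \<open>Functions on the groupoid are represented as functions on G \<times> X vanishing
  outside the groupoid.  Support = closure (in the groupoid) of the non-zero set.\<close>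
definition steinberg_algebra ::
  "('g \<Rightarrow> 'x::topological_space set) \<Rightarrow> ('g \<times> 'x \<Rightarrow> 'k::field) set" where
  "steinberg_algebra Xg =
     {f. (\<forall>p. p \<notin> groupoid_set Xg \<longrightarrow> f p = 0) \<and>
         (\<forall>p \<in> groupoid_set Xg. \<exists>U. openin (groupoid_top Xg) U \<and> p \<in> U \<and> (\<forall>q\<in>U. f q = f p)) \<and>
         compactin (groupoid_top Xg) ((groupoid_top Xg) closure_of {p \<in> groupoid_set Xg. f p \<noteq> 0})}"

text \<open>Convolution: (f * h)(k, x) = sum over arrows (g, x) with range x of
  f(g, x) h((g, x)^{-1} (k, x)) = f(g, x) h(-g + k, phi (-g) x).\<close>
definition convolution ::
  "('g::group_add \<Rightarrow> 'x \<Rightarrow> 'x) \<Rightarrow> ('g \<Rightarrow> 'x set) \<Rightarrow> ('g \<times> 'x \<Rightarrow> 'k::field)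
     \<Rightarrow> ('g \<times> 'x \<Rightarrow> 'k) \<Rightarrow> ('g \<times> 'x \<Rightarrow> 'k)" where
  "convolution phi Xg f h = (\<lambda>(k, x).
     if x \<in> Xg k then (\<Sum>g \<in> {g. x \<in> Xg g \<and> f (g, x) \<noteq> 0}. f (g, x) * h (- g + k, phi (- g) x))
     else 0)"

definition steinberg_component ::
  "('g \<Rightarrow> 'x::topological_space set) \<Rightarrow> 'g \<Rightarrow> ('g \<times> 'x \<Rightarrow> 'k::field) set" where
  "steinberg_component Xg g = {f \<in> steinberg_algebra Xg. \<forall>h x. h \<noteq> g \<longrightarrow> f (h, x) = 0}"

definition graded_von_neumann_regular ::
  "'a set \<Rightarrow> ('a \<Rightarrow> 'a \<Rightarrow> 'a) \<Rightarrow> ('g \<Rightarrow> 'a set) \<Rightarrow> bool" where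
  "graded_von_neumann_regular A m Ag \<longleftrightarrow> (\<forall>g. \<forall>x \<in> Ag g. \<exists>y \<in> A. m (m x y) x = x)"

end

theory Submission
  imports Defs
begin

(* A homogeneous element f of degree g is supported in {g} x X_g. Its quasi-inverse is f
   composed with the groupoid inversion (g, x) |-> (-g, phi_{-g} x), with the non-zero values
   inverted pointwise. Inversion is a homeomorphism of the groupoid, so this function is again
   locally constant with compact support. The convolution f * y is the indicator of the range
   of the support of f inside the unit space {0} x X, and it acts as a left unit on f. *)

lemma closedin_nonzero_locally_constant:
  assumes "\<forall>p \<in> topspace T. \<exists>U. openin T U \<and> p \<in> U \<and> (\<forall>q\<in>U. f q = f p)"
  shows "closedin T {p \<in> topspace T. f p \<noteq> 0}"
proof -
  have "\<exists>U. openin T U \<and> p \<in> U \<and> U \<subseteq> {p \<in> topspace T. f p = 0}"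
    if "p \<in> topspace T" "f p = 0" for p
  proof -
    obtain U where U: "openin T U" "p \<in> U" "\<forall>q\<in>U. f q = f p"
      using assms \<open>p \<in> topspace T\<close> by blast
    then have "U \<subseteq> {p \<in> topspace T. f p = 0}"
      using openin_subset \<open>f p = 0\<close> by fastforce
    with U show ?thesis
      by blast
  qed
  then have "openin T {p \<in> topspace T. f p = 0}"
    by (subst openin_subopen) blast
  moreover have "topspace T - {p \<in> topspace T. f p \<noteq> 0} = {p \<in> topspace T. f p = 0}"
    by blast
  ultimately show ?thesis
    by (simp add: closedin_def)
qed

lemma topspace_groupoid_top [simp]: "topspace (groupoid_top Xg) = groupoid_set Xg"
  by (simp add: groupoid_top_def)

lemma steinberg_algebra_iff:
  "f \<in> steinberg_algebra Xg \<longleftrightarrow>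
     (\<forall>p. p \<notin> groupoid_set Xg \<longrightarrow> f p = 0) \<and>
     (\<forall>p \<in> groupoid_set Xg. \<exists>U. openin (groupoid_top Xg) U \<and> p \<in> U \<and> (\<forall>q\<in>U. f q = f p)) \<and>
     compactin (prod_topology (discrete_topology UNIV) euclidean) {p \<in> groupoid_set Xg. f p \<noteq> 0}"
proof -
  have "groupoid_top Xg closure_of {p \<in> groupoid_set Xg. f p \<noteq> 0} = {p \<in> groupoid_set Xg. f p \<noteq> 0}"
    if "\<forall>p \<in> groupoid_set Xg. \<exists>U. openin (groupoid_top Xg) U \<and> p \<in> U \<and> (\<forall>q\<in>U. f q = f p)"
    using closedin_nonzero_locally_constant[of "groupoid_top Xg" f] that
    by (simp add: closure_of_eq)
  then show ?thesis
    unfolding steinberg_algebra_def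
    by (auto simp: groupoid_top_def compactin_subtopology)
qed

lemma open_slice_groupoid_top:
  assumes "openin (groupoid_top Xg) U" "open (Xg g)"
  shows "open {x. (g, x) \<in> U}"
proof -
  obtain V where V: "openin (prod_topology (discrete_topology UNIV) euclidean) V"
    and U: "U = V \<inter> groupoid_set Xg"
    using assms(1) by (auto simp: groupoid_top_def openin_subtopology)
  have "continuous_map euclidean (prod_topology (discrete_topology UNIV) euclidean) (\<lambda>x. (g, x))"
    by (simp add: continuous_map_pairwise o_def)
  then have "open {x. (g, x) \<in> V}"
    using openin_continuous_map_preimage[OF _ V] by fastforce
  moreover have "{x. (g, x) \<in> U} = {x. (g, x) \<in> V} \<inter> Xg g"
    using U by (auto simp: groupoid_set_def)
  ultimately show ?thesis
    using assms(2) by auto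
qed

lemma openin_groupoid_top_Times:
  assumes "open W" "W \<subseteq> Xg g"
  shows "openin (groupoid_top Xg) ({g} \<times> W)"
proof -
  have "openin (prod_topology (discrete_topology UNIV) euclidean) ({g} \<times> W)"
    using assms(1) by (simp add: openin_prod_Times_iff)
  moreover have "{g} \<times> W = ({g} \<times> W) \<inter> groupoid_set Xg"
    using assms(2) by (auto simp: groupoid_set_def)
  ultimately show ?thesis
    unfolding groupoid_top_def openin_subtopology by blast
qed

lemma steinberg_component_support:
  assumes "f \<in> steinberg_component Xg g"
  shows "{p. f p \<noteq> 0} \<subseteq> Sigma {g} Xg"
  using assms unfolding steinberg_component_def steinberg_algebra_def groupoid_set_def by fastforce

lemma convolution_homogeneous_left:
  assumes "{p. f p \<noteq> 0} \<subseteq> Sigma {g} Xg"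
  shows "convolution phi Xg f u (k, x) =
           (if x \<in> Xg k then f (g, x) * u (- g + k, phi (- g) x) else 0)"
proof -
  have "{h. x \<in> Xg h \<and> f (h, x) \<noteq> 0} = (if f (g, x) \<noteq> 0 then {g} else {})"
    using assms by force
  then show ?thesis
    by (simp add: convolution_def)
qed

lemma partial_action_inverse:
  assumes "partial_action phi Xg" "x \<in> Xg g"
  shows "phi g (phi (- g) x) = x"
  using assms unfolding partial_action_def
  by (metis IntI UNIV_I add.right_inverse minus_minus)

lemma partial_action_maps_to:
  assumes "partial_action phi Xg" "x \<in> Xg (- g)"
  shows "phi g x \<in> Xg g"
  using assms unfolding partial_action_def
  by (metis IntI UNIV_I image_eqI IntD1)

lemma partial_action_continuous_on:
  assumes "partial_action phi Xg"
  shows "continuous_on (Xg (- g)) (phi g)"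
  using assms unfolding partial_action_def
  by (metis homeomorphic_imp_continuous_map continuous_map_subtopology_eu)

definition graded_quasi_inverse ::
  "('g::group_add \<Rightarrow> 'x \<Rightarrow> 'x) \<Rightarrow> ('g \<Rightarrow> 'x set) \<Rightarrow> 'g \<Rightarrow> ('g \<times> 'x \<Rightarrow> 'k::field) \<Rightarrow> ('g \<times> 'x \<Rightarrow> 'k)"
  where "graded_quasi_inverse phi Xg g f = (\<lambda>(h, z).
     if h = - g \<and> z \<in> Xg (- g) \<and> f (g, phi g z) \<noteq> 0 then inverse (f (g, phi g z)) else 0)"

definition range_indicator :: "'g \<Rightarrow> ('g \<times> 'x \<Rightarrow> 'k) \<Rightarrow> ('g::zero \<times> 'x \<Rightarrow> 'k::field)"
  where "range_indicator g f = (\<lambda>(k, x). if k = 0 \<and> f (g, x) \<noteq> 0 then 1 else 0)"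

lemma graded_quasi_inverse_locally_constant:
  assumes pa: "partial_action phi Xg"
    and f_lc: "\<forall>p \<in> groupoid_set Xg. \<exists>U. openin (groupoid_top Xg) U \<and> p \<in> U \<and> (\<forall>q\<in>U. f q = f p)"
    and p: "p \<in> groupoid_set Xg"
  shows "\<exists>U. openin (groupoid_top Xg) U \<and> p \<in> U \<and>
           (\<forall>q\<in>U. graded_quasi_inverse phi Xg g f q = graded_quasi_inverse phi Xg g f p)"
proof -
  let ?y = "graded_quasi_inverse phi Xg g f"
  obtain h z where p_eq: "p = (h, z)" and z: "z \<in> Xg h"
    using p by (auto simp: groupoid_set_def)
  have open_Xg: "open (Xg k)" for k
    using pa by (simp add: partial_action_def)
  show ?thesis
  proof (cases "h = - g")
    case False
    have "openin (groupoid_top Xg) ({h} \<times> Xg h)"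
      by (rule openin_groupoid_top_Times) (simp_all add: open_Xg)
    with False z p_eq show ?thesis
      by (intro exI[of _ "{h} \<times> Xg h"]) (auto simp: graded_quasi_inverse_def)
  next
    case True
    have "(g, phi g z) \<in> groupoid_set Xg"
      using partial_action_maps_to[OF pa] z True by (simp add: groupoid_set_def)
    then obtain U where U: "openin (groupoid_top Xg) U" "(g, phi g z) \<in> U"
      and f_const: "\<forall>q\<in>U. f q = f (g, phi g z)"
      using f_lc by blast
    define W where "W = phi g -` {x. (g, x) \<in> U} \<inter> Xg (- g)"
    have "open W"
      using continuous_on_open_vimage[OF open_Xg] partial_action_continuous_on[OF pa]
        open_slice_groupoid_top[OF U(1) open_Xg]
      unfolding W_def by blast
    then have "openin (groupoid_top Xg) ({h} \<times> W)"
      by (rule openin_groupoid_top_Times) (auto simp: W_def True)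
    moreover have "?y q = ?y p" if "q \<in> {h} \<times> W" for q
      using that f_const z True p_eq by (auto simp: W_def graded_quasi_inverse_def)
    moreover have "p \<in> {h} \<times> W"
      using U(2) z True p_eq by (simp add: W_def)
    ultimately show ?thesis
      by blast
  qed
qed

lemma nonzero_graded_quasi_inverse:
  assumes pa: "partial_action phi Xg"
    and f_supp: "{p. f p \<noteq> 0} \<subseteq> Sigma {g} Xg"
  shows "{p \<in> groupoid_set Xg. graded_quasi_inverse phi Xg g f p \<noteq> 0} =
           (\<lambda>p. (- g, phi (- g) (snd p))) ` {p \<in> groupoid_set Xg. f p \<noteq> 0}"
    (is "?Ny = ?m ` ?Nf")
proof
  show "?m ` ?Nf \<subseteq> ?Ny"
  proof
    fix q assume "q \<in> ?m ` ?Nf"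
    then obtain x where x: "f (g, x) \<noteq> 0" "q = ?m (g, x)" and "x \<in> Xg g"
      using f_supp by fastforce
    then show "q \<in> ?Ny"
      using x partial_action_maps_to[OF pa, of x "- g"] partial_action_inverse[OF pa]
      by (auto simp: graded_quasi_inverse_def groupoid_set_def)
  qed
  show "?Ny \<subseteq> ?m ` ?Nf"
  proof
    fix q assume q: "q \<in> ?Ny"
    obtain h w where "q = (h, w)"
      by fastforce
    with q have w: "q = (- g, w)" "w \<in> Xg (- g)" "f (g, phi g w) \<noteq> 0"
      by (auto simp: graded_quasi_inverse_def split: if_splits)
    have "phi (- g) (phi g w) = w"
      using partial_action_inverse[OF pa, of w "- g"] w(2) by simp
    then have "q = ?m (g, phi g w)"
      using w(1) by simp
    moreover have "(g, phi g w) \<in> ?Nf"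
      using w partial_action_maps_to[OF pa] by (simp add: groupoid_set_def)
    ultimately show "q \<in> ?m ` ?Nf"
      by blast
  qed
qed

lemma compactin_nonzero_graded_quasi_inverse:
  assumes pa: "partial_action phi Xg"
    and f_supp: "{p. f p \<noteq> 0} \<subseteq> Sigma {g} Xg"
    and f_cpt: "compactin (prod_topology (discrete_topology UNIV) euclidean) {p \<in> groupoid_set Xg. f p \<noteq> 0}"
  shows "compactin (prod_topology (discrete_topology UNIV) euclidean)
           {p \<in> groupoid_set Xg. graded_quasi_inverse phi Xg g f p \<noteq> 0}"
proof -
  let ?P = "prod_topology (discrete_topology (UNIV :: 'a set)) (euclidean :: 'b topology)"
  let ?Nf = "{p \<in> groupoid_set Xg. f p \<noteq> 0}"
  let ?m = "\<lambda>p. (- g, phi (- g) (snd p))"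
  have "snd p \<in> Xg g" if "p \<in> ?Nf" for p
    using that f_supp by auto
  then have "continuous_map (subtopology ?P ?Nf) (top_of_set (Xg g)) snd"
    by (intro continuous_map_into_subtopology continuous_map_from_subtopology continuous_map_snd) auto
  moreover have "continuous_map (top_of_set (Xg g)) (top_of_set (Xg (- g))) (phi (- g))"
    using pa unfolding partial_action_def by (metis homeomorphic_imp_continuous_map minus_minus)
  ultimately have "continuous_map (subtopology ?P ?Nf) euclidean (phi (- g) \<circ> snd)"
    using continuous_map_compose continuous_map_into_fulltopology by blast
  then have "continuous_map (subtopology ?P ?Nf) ?P ?m"
    by (simp add: continuous_map_pairwise o_def)
  then have "compactin ?P (?m ` ?Nf)"
    by (rule image_compactin[rotated]) (simp add: compactin_subtopology f_cpt)
  moreover have "{p \<in> groupoid_set Xg. graded_quasi_inverse phi Xg g f p \<noteq> 0} = ?m ` ?Nf"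
    using pa f_supp by (rule nonzero_graded_quasi_inverse)
  ultimately show ?thesis
    by simp
qed

lemma graded_quasi_inverse_in_steinberg_algebra:
  assumes pa: "partial_action phi Xg" and f: "f \<in> steinberg_component Xg g"
  shows "graded_quasi_inverse phi Xg g f \<in> steinberg_algebra Xg"
proof -
  have f_supp: "{p. f p \<noteq> 0} \<subseteq> Sigma {g} Xg"
    using steinberg_component_support[OF f] .
  have "f \<in> steinberg_algebra Xg"
    using f by (simp add: steinberg_component_def)
  then have f_lc: "\<forall>p \<in> groupoid_set Xg. \<exists>U. openin (groupoid_top Xg) U \<and> p \<in> U \<and> (\<forall>q\<in>U. f q = f p)"
    and f_cpt: "compactin (prod_topology (discrete_topology UNIV) euclidean) {p \<in> groupoid_set Xg. f p \<noteq> 0}"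
    unfolding steinberg_algebra_iff by auto
  have "\<forall>p. p \<notin> groupoid_set Xg \<longrightarrow> graded_quasi_inverse phi Xg g f p = 0"
    by (auto simp: graded_quasi_inverse_def groupoid_set_def)
  moreover have "\<forall>p \<in> groupoid_set Xg. \<exists>U. openin (groupoid_top Xg) U \<and> p \<in> U \<and>
                   (\<forall>q\<in>U. graded_quasi_inverse phi Xg g f q = graded_quasi_inverse phi Xg g f p)"
    by (intro ballI graded_quasi_inverse_locally_constant[OF pa f_lc])
  moreover have "compactin (prod_topology (discrete_topology UNIV) euclidean)
                   {p \<in> groupoid_set Xg. graded_quasi_inverse phi Xg g f p \<noteq> 0}"
    using pa f_supp f_cpt by (rule compactin_nonzero_graded_quasi_inverse)
  ultimately show ?thesis
    unfolding steinberg_algebra_iff by (intro conjI)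
qed

lemma convolution_graded_quasi_inverse:
  assumes pa: "partial_action phi Xg"
    and f_supp: "{p. f p \<noteq> 0} \<subseteq> Sigma {g} Xg"
  shows "convolution phi Xg f (graded_quasi_inverse phi Xg g f) = range_indicator g f"
proof (intro ext, clarify)
  fix k x
  let ?y = "graded_quasi_inverse phi Xg g f"
  have conv: "convolution phi Xg f ?y (k, x) =
                (if x \<in> Xg k then f (g, x) * ?y (- g + k, phi (- g) x) else 0)"
    using f_supp by (rule convolution_homogeneous_left)
  show "convolution phi Xg f ?y (k, x) = range_indicator g f (k, x)"
  proof (cases "f (g, x) = 0")
    case False
    then have x: "x \<in> Xg g"
      using f_supp by blast
    have "- g + k = - g \<longleftrightarrow> k = 0"
      by (metis add.right_neutral add_left_cancel)
    then have "?y (- g + k, phi (- g) x) = (if k = 0 then inverse (f (g, x)) else 0)"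
      using False partial_action_maps_to[OF pa, of x "- g"] partial_action_inverse[OF pa x] x
      by (simp add: graded_quasi_inverse_def)
    moreover have "Xg 0 = UNIV"
      using pa by (simp add: partial_action_def)
    ultimately show ?thesis
      using conv False by (cases "k = 0") (simp_all add: range_indicator_def)
  qed (simp add: conv range_indicator_def)
qed

lemma convolution_range_indicator:
  assumes pa: "partial_action phi Xg"
    and f_supp: "{p. f p \<noteq> 0} \<subseteq> Sigma {g} Xg"
  shows "convolution phi Xg (range_indicator g f) f = f"
proof (intro ext, clarify)
  fix k x
  have "Xg 0 = UNIV" and phi0: "phi 0 x = x"
    using pa by (simp_all add: partial_action_def)
  then have "{p. range_indicator g f p \<noteq> 0} \<subseteq> Sigma {0} Xg"
    by (auto simp: range_indicator_def split: if_splits)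
  then have "convolution phi Xg (range_indicator g f) f (k, x) =
               (if x \<in> Xg k then range_indicator g f (0, x) * f (- 0 + k, phi (- 0) x) else 0)"
    by (rule convolution_homogeneous_left)
  then have conv: "convolution phi Xg (range_indicator g f) f (k, x) =
                     (if x \<in> Xg k then range_indicator g f (0, x) * f (k, x) else 0)"
    using phi0 by simp
  show "convolution phi Xg (range_indicator g f) f (k, x) = f (k, x)"
  proof (cases "f (k, x) = 0")
    case False
    then have "k = g" "x \<in> Xg g"
      using f_supp by blast+
    with False have "range_indicator g f (0, x) = 1"
      by (simp add: range_indicator_def)
    moreover have "x \<in> Xg k"
      using \<open>k = g\<close> \<open>x \<in> Xg g\<close> by simp
    ultimately show ?thesis
      by (simp add: conv)
  qed (simp add: conv)
qed

theorem mainTheorem6: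
  fixes phi :: "'g::group_add \<Rightarrow> 'x::t2_space \<Rightarrow> 'x"
    and Xg :: "'g \<Rightarrow> 'x set"
  assumes "locally_compact_space (euclidean :: 'x topology)"
    and "totally_disconnected_space (euclidean :: 'x topology)"
    and "partial_action phi Xg"
    and "\<And>g. closed (Xg g)"
  shows "graded_von_neumann_regular (steinberg_algebra Xg :: ('g \<times> 'x \<Rightarrow> 'k::field) set)
           (convolution phi Xg) (steinberg_component Xg)"
  unfolding graded_von_neumann_regular_def
proof (intro allI ballI)
  fix g and f :: "'g \<times> 'x \<Rightarrow> 'k"
  assume f: "f \<in> steinberg_component Xg g"
  have f_supp: "{p. f p \<noteq> 0} \<subseteq> Sigma {g} Xg"
    using steinberg_component_support[OF f] .
  have "convolution phi Xg f (graded_quasi_inverse phi Xg g f) = range_indicator g f"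
    using assms(3) f_supp by (rule convolution_graded_quasi_inverse)
  moreover have "convolution phi Xg (range_indicator g f) f = f"
    using assms(3) f_supp by (rule convolution_range_indicator)
  ultimately have "convolution phi Xg (convolution phi Xg f (graded_quasi_inverse phi Xg g f)) f = f"
    by simp
  then show "\<exists>y \<in> steinberg_algebra Xg. convolution phi Xg (convolution phi Xg f y) f = f"
    using graded_quasi_inverse_in_steinberg_algebra[OF assms(3) f] by (rule bexI)
qed

end
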